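(* Let $A,B\subseteq\Sigma^+$ (not necessarily finite) and $k\ge1$. The term $\langle A,B\rangle$ has a deduction tree of size $k$ if and only if there is a formula $\phi\in\mathrm{LTL}[\mathsf{X},\mathsf{wX},\mathsf{F},\mathsf{G}]$ separating $A$ from $B$ with $\mathrm{size}(\phi)=k$.
   Context: Let $AP$ be a finite set of atomic propositions and $\Sigma=2^{AP}$. Formulae of $\mathrm{LTL}[\mathsf{X},\mathsf{wX},\mathsf{F},\mathsf{G}]$ are generated by $\phi::=p\mid\neg p\mid\phi\lor\phi\mid\phi\land\phi\mid\mathsf{X}\phi\mid\mathsf{wX}\phi\mid\mathsf{F}\phi\mid\mathsf{G}\phi$ ($p\in AP$), interpreted on $\sigma\in\Sigma^+$ at positions $0\le i<|\sigma|$: literals/Booleans as usual; $\mathsf{X}\phi$: $i+1<|\sigma|$ and $\phi$ at $i+1$; $\mathsf{wX}\phi$: $i+1=|\sigma|$ or $\phi$ at $i+1$; $\mathsf{F}\phi$/$\mathsf{G}\phi$: $\phi$ at some/every $j$ with $i\le j<|\sigma|$. Size: literals 1, unary operators add 1, binary connectives sum sizes plus 1. For $C\subseteq\Sigma^+$, write $C\models\phi$ if $\sigma,0\models\phi$ for all $\sigma\in C$ and $C\perp\phi$ if $\sigma,0\not\models\phi$ for all $\sigma\in C$; $\phi$ separates $A$ from $B$ if $A\models\phi$ and $B\perp\phi$. Notation: for $\sigma=w_0\cdots w_m$ and $j\le m$, $\sigma^{(j)}=w_j\cdots w_m$; $A^{\mathsf X}=\{\sigma^{(1)}:\sigma\in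 A,|\sigma|\ge2\}$; $A^{\mathsf G}=\{\sigma^{(j)}:\sigma\in A, 0\le j<|\sigma|\}$; a future point for $A$ is a map $f:A\to\mathbb N$ with $f(\sigma)<|\sigma|$ for all $\sigma\in A$, and then $A^f=\{\sigma^{(f(\sigma))}:\sigma\in A\}$. Proof system: terms are pairs $\langle A,B\rangle$ with $A,B\subseteq\Sigma^+$; the rules (conclusion from hypotheses) are: Atomic: $\langle A,B\rangle$ with no hypotheses, provided $A\models\alpha$ and $B\perp\alpha$ for some literal $\alpha$; Or: $\langle A_1\uplus A_2,B\rangle$ from $\langle A_1,B\rangle$ and $\langle A_2,B\rangle$ ($\uplus$ = union of disjoint sets); And: $\langle A,B_1\uplus B_2\rangle$ from $\langle A,B_1\rangle$ and $\langle A,B_2\rangle$; Next: $\langle A,B\rangle$ from $\langle A^{\mathsf X},B^{\mathsf X}\rangle$ provided $|A^{\mathsf X}|=|A|$; WeakNext: $\langle A,B\rangle$ from $\langle A^{\mathsf X},B^{\mathsf X}\rangle$ provided $|B^{\mathsf X}|=|B|$; Future: $\langle A,B\rangle$ from $\langle A^f,B^{\mathsf G}\rangle$ for some future point $f$ for $A$; Globally: $\langle A,B\rangle$ from $\langle A^{\mathsf G},B^f\rangle$ for some future point $f$ for $B$. A deduction tree for $\langle A,B\rangle$ is a finite tree of rule applications with root conclusion $\langle A,B\rangle$, in which every hypothesis is the conclusion of a rule application (so all branches end in Atomic); its size is the number of rule applications in it. *)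

theory Defs
  imports Main
begin

text \<open>Atomic propositions: a finite type 'a. Letters: 'a set (= 2^AP).
  Finite words: 'a set list, required to be nonempty.\<close>

datatype 'a ltl =
    Lit 'a
  | NLit 'a
  | Or "'a ltl" "'a ltl"
  | And "'a ltl" "'a ltl"
  | Nxt "'a ltl"
  | WNxt "'a ltl"
  | Fut "'a ltl"
  | Glob "'a ltl"

fun holds :: "'a set list \<Rightarrow> nat \<Rightarrow> 'a ltl \<Rightarrow> bool" where
  "holds w i (Lit p) = (p \<in> w ! i)"
| "holds w i (NLit p) = (p \<notin> w ! i)"
| "holds w i (Or \<phi> \<psi>) = (holds w i \<phi> \<or> holds w i \<psi>)"
| "holds w i (And \<phi> \<psi>) = (holds w i \<phi> \<and> holds w i \<psi>)"
| "holds w i (Nxt \<phi>) = (i + 1 < length w \<and> holds w (i + 1) \<phi>)"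
| "holds w i (WNxt \<phi>) = (i + 1 = length w \<or> holds w (i + 1) \<phi>)"
| "holds w i (Fut \<phi>) = (\<exists>j. i \<le> j \<and> j < length w \<and> holds w j \<phi>)"
| "holds w i (Glob \<phi>) = (\<forall>j. i \<le> j \<and> j < length w \<longrightarrow> holds w j \<phi>)"

fun fsize :: "'a ltl \<Rightarrow> nat" where
  "fsize (Lit p) = 1"
| "fsize (NLit p) = 1"
| "fsize (Or \<phi> \<psi>) = fsize \<phi> + fsize \<psi> + 1"
| "fsize (And \<phi> \<psi>) = fsize \<phi> + fsize \<psi> + 1"
| "fsize (Nxt \<phi>) = fsize \<phi> + 1"
| "fsize (WNxt \<phi>) = fsize \<phi> + 1"
| "fsize (Fut \<phi>) = fsize \<phi> + 1"
| "fsize (Glob \<phi>) = fsize \<phi> + 1"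

definition models :: "'a set list set \<Rightarrow> 'a ltl \<Rightarrow> bool" where
  "models C \<phi> \<longleftrightarrow> (\<forall>\<sigma>\<in>C. holds \<sigma> 0 \<phi>)"

definition perp :: "'a set list set \<Rightarrow> 'a ltl \<Rightarrow> bool" where
  "perp C \<phi> \<longleftrightarrow> (\<forall>\<sigma>\<in>C. \<not> holds \<sigma> 0 \<phi>)"

definition separates :: "'a ltl \<Rightarrow> 'a set list set \<Rightarrow> 'a set list set \<Rightarrow> bool" where
  "separates \<phi> A B \<longleftrightarrow> models A \<phi> \<and> perp B \<phi>"

definition is_literal :: "'a ltl \<Rightarrow> bool" where
  "is_literal \<alpha> \<longleftrightarrow> (\<exists>p. \<alpha> = Lit p \<or> \<alpha> = NLit p)"

text \<open>sigma^(j) is drop j sigma.\<close>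

definition nextset :: "'a set list set \<Rightarrow> 'a set list set" where
  "nextset A = {drop 1 \<sigma> | \<sigma>. \<sigma> \<in> A \<and> length \<sigma> \<ge> 2}"

definition globset :: "'a set list set \<Rightarrow> 'a set list set" where
  "globset A = {drop j \<sigma> | \<sigma> j. \<sigma> \<in> A \<and> j < length \<sigma>}"

definition future_point :: "('a set list \<Rightarrow> nat) \<Rightarrow> 'a set list set \<Rightarrow> bool" where
  "future_point f A \<longleftrightarrow> (\<forall>\<sigma>\<in>A. f \<sigma> < length \<sigma>)"

definition futset :: "'a set list set \<Rightarrow> ('a set list \<Rightarrow> nat) \<Rightarrow> 'a set list set" where
  "futset A f = {drop (f \<sigma>) \<sigma> | \<sigma>. \<sigma> \<in> A}"

text \<open>The side condition |A^X| = |A| of the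
  Next rule (resp. |B^X| = |B| of WeakNext) is read as: no word of A (resp. B)
  is lost when passing to A^X, i.e. every word of A has length at least 2.\<close>

inductive ded :: "'a set list set \<Rightarrow> 'a set list set \<Rightarrow> nat \<Rightarrow> bool" where
  atomic: "is_literal \<alpha> \<Longrightarrow> models A \<alpha> \<Longrightarrow> perp B \<alpha> \<Longrightarrow> ded A B 1"
| orR: "A1 \<inter> A2 = {} \<Longrightarrow> ded A1 B k1 \<Longrightarrow> ded A2 B k2 \<Longrightarrow> ded (A1 \<union> A2) B (k1 + k2 + 1)"
| andR: "B1 \<inter> B2 = {} \<Longrightarrow> ded A B1 k1 \<Longrightarrow> ded A B2 k2 \<Longrightarrow> ded A (B1 \<union> B2) (k1 + k2 + 1)"
| nextR: "\<forall>\<sigma>\<in>A. length \<sigma> \<ge> 2 \<Longrightarrow> ded (nextset A) (nextset B) k \<Longrightarrow> ded A B (k + 1)"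
| wnext: "\<forall>\<sigma>\<in>B. length \<sigma> \<ge> 2 \<Longrightarrow> ded (nextset A) (nextset B) k \<Longrightarrow> ded A B (k + 1)"
| future: "future_point f A \<Longrightarrow> ded (futset A f) (globset B) k \<Longrightarrow> ded A B (k + 1)"
| globally: "future_point f B \<Longrightarrow> ded (globset A) (futset B f) k \<Longrightarrow> ded A B (k + 1)"

end

theory Submission
  imports Defs
begin

text \<open>Each rule of the proof system is the semantic decomposition of one connective at
  the root of a separating formula. \<open>Or \<phi> \<psi>\<close> separates \<open>A\<close> from \<open>B\<close> iff \<open>A\<close> splits
  into a part separated by \<open>\<phi>\<close> and a part separated by \<open>\<psi>\<close>; \<open>Nxt \<phi>\<close> does iff all words
  of \<open>A\<close> have a successor position and \<open>\<phi>\<close> separates \<open>A\<^sup>X\<close> from \<open>B\<^sup>X\<close>; \<open>Fut \<phi>\<close> does iff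
  \<open>\<phi>\<close> separates a choice of witnessing suffixes \<open>A\<^sup>f\<close> from all suffixes \<open>B\<^sup>G\<close>; dually
  for \<open>And\<close>, \<open>WNxt\<close> and \<open>Glob\<close>. Induction on the deduction tree, resp. on the formula,
  then turns a tree into a formula and back, one rule application per connective, so
  the sizes agree.\<close>

lemma holds_drop:
  "j \<le> length w \<Longrightarrow> holds (drop j w) i \<phi> \<longleftrightarrow> holds w (j + i) \<phi>"
proof (induction \<phi> arbitrary: i)
  case (Fut \<phi>)
  then have "holds (drop j w) i (Fut \<phi>) \<longleftrightarrow> (\<exists>m. i \<le> m \<and> j + m < length w \<and> holds w (j + m) \<phi>)"
    by auto
  also have "\<dots> \<longleftrightarrow> holds w (j + i) (Fut \<phi>)"
    by (simp, metis add_leD1 less_eqE nat_add_left_cancel_le)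
  finally show ?case .
next
  case (Glob \<phi>)
  then have "holds (drop j w) i (Glob \<phi>) \<longleftrightarrow> (\<forall>m. i \<le> m \<and> j + m < length w \<longrightarrow> holds w (j + m) \<phi>)"
    by auto
  also have "\<dots> \<longleftrightarrow> holds w (j + i) (Glob \<phi>)"
    by (simp, metis add_leD1 less_eqE nat_add_left_cancel_le)
  finally show ?case .
qed (auto simp: algebra_simps)

lemma holds_drop_0: "j \<le> length w \<Longrightarrow> holds (drop j w) 0 \<phi> \<longleftrightarrow> holds w j \<phi>"
  using holds_drop[of j w 0] by simp

lemma nextset_eq_image: "nextset A = drop 1 ` {\<sigma>\<in>A. 2 \<le> length \<sigma>}"
  by (auto simp: nextset_def)

lemma globset_eq_UN: "globset A = (\<Union>\<sigma>\<in>A. (\<lambda>j. drop j \<sigma>) ` {..<length \<sigma>})"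
  by (auto simp: globset_def)

lemma futset_eq_image: "futset A f = (\<lambda>\<sigma>. drop (f \<sigma>) \<sigma>) ` A"
  by (auto simp: futset_def)

lemma Nil_notin_nextset: "[] \<notin> nextset A"
  by (auto simp: nextset_def)

lemma Nil_notin_globset: "[] \<notin> globset A"
  by (auto simp: globset_def)

lemma Nil_notin_futset: "future_point f A \<Longrightarrow> [] \<notin> futset A f"
  by (auto simp: futset_def future_point_def)

lemma models_Nxt_iff:
  "models A (Nxt \<phi>) \<longleftrightarrow> (\<forall>\<sigma>\<in>A. 2 \<le> length \<sigma>) \<and> models (nextset A) \<phi>"
  by (auto simp: models_def nextset_eq_image holds_drop_0)

lemma perp_Nxt_iff: "perp B (Nxt \<phi>) \<longleftrightarrow> perp (nextset B) \<phi>"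
  by (auto simp: perp_def nextset_eq_image holds_drop_0)

text \<open>The empty word is excluded because there \<open>WNxt \<phi>\<close> would be evaluated at the
  nonexistent position 1, where \<open>holds\<close> returns junk.\<close>

lemma models_WNxt_iff:
  assumes "[] \<notin> A"
  shows "models A (WNxt \<phi>) \<longleftrightarrow> models (nextset A) \<phi>"
proof -
  have "holds \<sigma> 0 (WNxt \<phi>) \<longleftrightarrow> (2 \<le> length \<sigma> \<longrightarrow> holds \<sigma> 1 \<phi>)" if "\<sigma> \<in> A" for \<sigma>
    using assms that by (cases \<sigma>) (auto simp: Suc_le_eq)
  then show ?thesis
    by (auto simp: models_def nextset_eq_image holds_drop_0)
qed

lemma perp_WNxt_iff:
  assumes "[] \<notin> B"
  shows "perp B (WNxt \<phi>) \<longleftrightarrow> (\<forall>\<sigma>\<in>B. 2 \<le> length \<sigma>) \<and> perp (nextset B) \<phi>"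
proof -
  have "holds \<sigma> 0 (WNxt \<phi>) \<longleftrightarrow> (2 \<le> length \<sigma> \<longrightarrow> holds \<sigma> 1 \<phi>)" if "\<sigma> \<in> B" for \<sigma>
    using assms that by (cases \<sigma>) (auto simp: Suc_le_eq)
  then show ?thesis
    by (auto simp: perp_def nextset_eq_image holds_drop_0)
qed

lemma models_Fut_iff:
  "models A (Fut \<phi>) \<longleftrightarrow> (\<exists>f. future_point f A \<and> models (futset A f) \<phi>)"
proof
  assume "models A (Fut \<phi>)"
  then have "\<forall>\<sigma>\<in>A. \<exists>j. j < length \<sigma> \<and> holds \<sigma> j \<phi>"
    by (auto simp: models_def)
  then obtain f where "\<forall>\<sigma>\<in>A. f \<sigma> < length \<sigma> \<and> holds \<sigma> (f \<sigma>) \<phi>"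
    by metis
  then show "\<exists>f. future_point f A \<and> models (futset A f) \<phi>"
    by (intro exI[of _ f]) (auto simp: future_point_def futset_eq_image models_def holds_drop_0)
qed (force simp: future_point_def futset_eq_image models_def holds_drop_0)

lemma perp_Fut_iff: "perp B (Fut \<phi>) \<longleftrightarrow> perp (globset B) \<phi>"
  by (auto simp: perp_def globset_eq_UN holds_drop_0)

lemma models_Glob_iff: "models A (Glob \<phi>) \<longleftrightarrow> models (globset A) \<phi>"
  by (auto simp: models_def globset_eq_UN holds_drop_0)

lemma perp_Glob_iff:
  "perp B (Glob \<phi>) \<longleftrightarrow> (\<exists>f. future_point f B \<and> perp (futset B f) \<phi>)"
proof
  assume "perp B (Glob \<phi>)"
  then have "\<forall>\<sigma>\<in>B. \<exists>j. j < length \<sigma> \<and> \<not> holds \<sigma> j \<phi>"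
    by (auto simp: perp_def)
  then obtain f where "\<forall>\<sigma>\<in>B. f \<sigma> < length \<sigma> \<and> \<not> holds \<sigma> (f \<sigma>) \<phi>"
    by metis
  then show "\<exists>f. future_point f B \<and> perp (futset B f) \<phi>"
    by (intro exI[of _ f]) (auto simp: future_point_def futset_eq_image perp_def holds_drop_0)
qed (force simp: future_point_def futset_eq_image perp_def holds_drop_0)

lemma separates_Or_iff:
  "separates (Or \<phi> \<psi>) A B \<longleftrightarrow>
     (\<exists>A1 A2. A1 \<inter> A2 = {} \<and> A = A1 \<union> A2 \<and> separates \<phi> A1 B \<and> separates \<psi> A2 B)"
proof
  assume "separates (Or \<phi> \<psi>) A B"
  then show "\<exists>A1 A2. A1 \<inter> A2 = {} \<and> A = A1 \<union> A2 \<and> separates \<phi> A1 B \<and> separates \<psi> A2 B"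
    by (intro exI[of _ "{\<sigma>\<in>A. holds \<sigma> 0 \<phi>}"] exI[of _ "{\<sigma>\<in>A. \<not> holds \<sigma> 0 \<phi>}"])
      (auto simp: separates_def models_def perp_def)
qed (auto simp: separates_def models_def perp_def)

lemma separates_And_iff:
  "separates (And \<phi> \<psi>) A B \<longleftrightarrow>
     (\<exists>B1 B2. B1 \<inter> B2 = {} \<and> B = B1 \<union> B2 \<and> separates \<phi> A B1 \<and> separates \<psi> A B2)"
proof
  assume "separates (And \<phi> \<psi>) A B"
  then show "\<exists>B1 B2. B1 \<inter> B2 = {} \<and> B = B1 \<union> B2 \<and> separates \<phi> A B1 \<and> separates \<psi> A B2"
    by (intro exI[of _ "{\<sigma>\<in>B. \<not> holds \<sigma> 0 \<phi>}"] exI[of _ "{\<sigma>\<in>B. holds \<sigma> 0 \<phi>}"])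
      (auto simp: separates_def models_def perp_def)
qed (auto simp: separates_def models_def perp_def)

lemma separates_Nxt_iff:
  "separates (Nxt \<phi>) A B \<longleftrightarrow> (\<forall>\<sigma>\<in>A. 2 \<le> length \<sigma>) \<and> separates \<phi> (nextset A) (nextset B)"
  by (auto simp: separates_def models_Nxt_iff perp_Nxt_iff)

lemma separates_WNxt_iff:
  "[] \<notin> A \<Longrightarrow> [] \<notin> B \<Longrightarrow>
    separates (WNxt \<phi>) A B \<longleftrightarrow> (\<forall>\<sigma>\<in>B. 2 \<le> length \<sigma>) \<and> separates \<phi> (nextset A) (nextset B)"
  by (auto simp: separates_def models_WNxt_iff perp_WNxt_iff)

lemma separates_Fut_iff:
  "separates (Fut \<phi>) A B \<longleftrightarrow> (\<exists>f. future_point f A \<and> separates \<phi> (futset A f) (globset B))"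
  by (auto simp: separates_def models_Fut_iff perp_Fut_iff)

lemma separates_Glob_iff:
  "separates (Glob \<phi>) A B \<longleftrightarrow> (\<exists>f. future_point f B \<and> separates \<phi> (globset A) (futset B f))"
  by (auto simp: separates_def models_Glob_iff perp_Glob_iff)

lemma ded_imp_separates:
  assumes "ded A B k" and "[] \<notin> A" and "[] \<notin> B"
  shows "\<exists>\<phi>. separates \<phi> A B \<and> fsize \<phi> = k"
  using assms
proof (induction rule: ded.induct)
  case (atomic \<alpha> A B)
  then show ?case
    by (auto simp: is_literal_def separates_def)
next
  case (orR A1 A2 B k1 k2)
  then obtain \<phi> \<psi> where "separates \<phi> A1 B" "separates \<psi> A2 B" "fsize \<phi> = k1" "fsize \<psi> = k2"
    by auto
  with orR.hyps(1) show ?case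
    by (intro exI[of _ "Or \<phi> \<psi>"]) (auto simp: separates_Or_iff)
next
  case (andR B1 B2 A k1 k2)
  then obtain \<phi> \<psi> where "separates \<phi> A B1" "separates \<psi> A B2" "fsize \<phi> = k1" "fsize \<psi> = k2"
    by auto
  with andR.hyps(1) show ?case
    by (intro exI[of _ "And \<phi> \<psi>"]) (auto simp: separates_And_iff)
next
  case (nextR A B k)
  then obtain \<phi> where "separates \<phi> (nextset A) (nextset B)" "fsize \<phi> = k"
    using Nil_notin_nextset by blast
  with nextR.hyps(1) show ?case
    by (intro exI[of _ "Nxt \<phi>"]) (simp add: separates_Nxt_iff)
next
  case (wnext B A k)
  then obtain \<phi> where "separates \<phi> (nextset A) (nextset B)" "fsize \<phi> = k"
    using Nil_notin_nextset by blast
  with wnext show ?case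
    by (intro exI[of _ "WNxt \<phi>"]) (simp add: separates_WNxt_iff)
next
  case (future f A B k)
  then obtain \<phi> where "separates \<phi> (futset A f) (globset B)" "fsize \<phi> = k"
    using Nil_notin_futset Nil_notin_globset by blast
  with future.hyps(1) show ?case
    by (intro exI[of _ "Fut \<phi>"]) (auto simp: separates_Fut_iff)
next
  case (globally f B A k)
  then obtain \<phi> where "separates \<phi> (globset A) (futset B f)" "fsize \<phi> = k"
    using Nil_notin_futset Nil_notin_globset by blast
  with globally.hyps(1) show ?case
    by (intro exI[of _ "Glob \<phi>"]) (auto simp: separates_Glob_iff)
qed

lemma separates_imp_ded:
  assumes "separates \<phi> A B" and "[] \<notin> A" and "[] \<notin> B"
  shows "ded A B (fsize \<phi>)"
  using assms
proof (induction \<phi> arbitrary: A B)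
  case (Lit p)
  then show ?case
    using ded.atomic[of "Lit p"] by (simp add: is_literal_def separates_def)
next
  case (NLit p)
  then show ?case
    using ded.atomic[of "NLit p"] by (simp add: is_literal_def separates_def)
next
  case (Or \<phi> \<psi>)
  then obtain A1 A2 where A: "A1 \<inter> A2 = {}" "A = A1 \<union> A2"
    and "separates \<phi> A1 B" "separates \<psi> A2 B"
    by (auto simp: separates_Or_iff)
  with Or have "ded A1 B (fsize \<phi>)" "ded A2 B (fsize \<psi>)"
    by auto
  with A show ?case
    using ded.orR[of A1 A2 B] by simp
next
  case (And \<phi> \<psi>)
  then obtain B1 B2 where B: "B1 \<inter> B2 = {}" "B = B1 \<union> B2"
    and "separates \<phi> A B1" "separates \<psi> A B2"
    by (auto simp: separates_And_iff)
  with And have "ded A B1 (fsize \<phi>)" "ded A B2 (fsize \<psi>)"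
    by auto
  with B show ?case
    using ded.andR[of B1 B2 A] by simp
next
  case (Nxt \<phi>)
  then have "\<forall>\<sigma>\<in>A. 2 \<le> length \<sigma>" "ded (nextset A) (nextset B) (fsize \<phi>)"
    by (auto simp: separates_Nxt_iff Nil_notin_nextset)
  then show ?case
    using ded.nextR[of A B "fsize \<phi>"] by simp
next
  case (WNxt \<phi>)
  then have "\<forall>\<sigma>\<in>B. 2 \<le> length \<sigma>" "ded (nextset A) (nextset B) (fsize \<phi>)"
    by (auto simp: separates_WNxt_iff Nil_notin_nextset)
  then show ?case
    using ded.wnext[of B A "fsize \<phi>"] by simp
next
  case (Fut \<phi>)
  then obtain f where "future_point f A" "separates \<phi> (futset A f) (globset B)"
    by (auto simp: separates_Fut_iff)
  with Fut have "future_point f A" "ded (futset A f) (globset B) (fsize \<phi>)"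
    by (auto simp: Nil_notin_futset Nil_notin_globset)
  then show ?case
    using ded.future[of f A B "fsize \<phi>"] by simp
next
  case (Glob \<phi>)
  then obtain f where "future_point f B" "separates \<phi> (globset A) (futset B f)"
    by (auto simp: separates_Glob_iff)
  with Glob have "future_point f B" "ded (globset A) (futset B f) (fsize \<phi>)"
    by (auto simp: Nil_notin_futset Nil_notin_globset)
  then show ?case
    using ded.globally[of f B A "fsize \<phi>"] by simp
qed

theorem theorem3:
  fixes A B :: "('a::finite) set list set" and k :: nat
  assumes "\<forall>\<sigma>\<in>A. \<sigma> \<noteq> []" and "\<forall>\<sigma>\<in>B. \<sigma> \<noteq> []" and "k \<ge> 1"
  shows "ded A B k \<longleftrightarrow> (\<exists>\<phi>. separates \<phi> A B \<and> fsize \<phi> = k)"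
proof -
  from assms(1,2) have "[] \<notin> A" "[] \<notin> B"
    by auto
  then show ?thesis
    using ded_imp_separates separates_imp_ded by blast
qed

end
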